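(* Let $\mathcal{A}$ be any poset, $H$ a Hilbert space and $(H_a)_{a\in\mathcal{A}}$ an increasing family of closed subspaces of $H$ satisfying the intersection property $\pi(\hat a\cap\hat b)=\pi_a\pi_b$ for all $a,b\in\mathcal A$. For $a\in\mathcal{A}^+$ let $s_a^\perp$ denote the orthogonal projection of $H$ onto $S_a=H_a\cap\bigcap_{b<a}H_b^\perp$ (with $b\in\mathcal A^+$ and $H_1=H$). Then for all $a,b\in\mathcal{A}^+$, $$s_a^\perp s_b^\perp=\delta_a(b)\,s_a^\perp,$$ where $\delta_a(b)=1$ if $a=b$ and $0$ otherwise.
   Context: $\hat a=\{b:b\le a\}$. $\mathcal{A}^{+}$ denotes $\mathcal{A}$ with a new element $1$ strictly greater than all elements of $\mathcal A$; $H_1=H$. For $\mathcal{B}\subseteq\mathcal{A}$, $H(\mathcal{B})$ is the closure of $\sum_{b\in\mathcal{B}}H_b$ (zero if empty), $\pi(\mathcal{B})$ the orthogonal projection onto $H(\mathcal{B})$, and $\pi_a=\pi(\hat a)$ is the orthogonal projection onto $H_a$. *)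

theory Defs
  imports "HOL-Analysis.Analysis"
begin

definition orth_proj :: "'v::{real_inner,complete_space} set \<Rightarrow> 'v \<Rightarrow> 'v" where
  "orth_proj S x = (THE y. y \<in> S \<and> x - y \<in> orthogonal_comp S)"

definition Hsub :: "('a \<Rightarrow> 'v::real_inner set) \<Rightarrow> 'a set \<Rightarrow> 'v set" where
  "Hsub H B = closure (span (\<Union>b\<in>B. H b))"

definition piB :: "('a \<Rightarrow> 'v::{real_inner,complete_space} set) \<Rightarrow> 'a set \<Rightarrow> 'v \<Rightarrow> 'v" where
  "piB H B = orth_proj (Hsub H B)"

text \<open>A^+ is modelled as 'a option: Some a is a in A, None is the new top element 1.
  Strict order of A^+.\<close>
fun plus_less :: "'a::order option \<Rightarrow> 'a option \<Rightarrow> bool" where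
  "plus_less (Some b) (Some a) = (b < a)"
| "plus_less (Some b) None = True"
| "plus_less None _ = False"

fun Hplus :: "('a \<Rightarrow> 'v set) \<Rightarrow> 'a option \<Rightarrow> 'v set" where
  "Hplus H (Some a) = H a"
| "Hplus H None = UNIV"

definition Sset :: "('a::order \<Rightarrow> 'v::real_inner set) \<Rightarrow> 'a option \<Rightarrow> 'v set" where
  "Sset H a = Hplus H a \<inter> (\<Inter>b\<in>{b. plus_less b a}. orthogonal_comp (Hplus H b))"

end

theory Submission
  imports Defs
begin

(* The projections onto distinct S_a have orthogonal ranges.  For comparable a, b this is built
   into the definition of S_a; for incomparable a, b every c below both is strictly below b, so
   an element y of S_b is orthogonal to H(a-hat \<inter> b-hat), and the intersection property
   pi_a y = pi(a-hat \<inter> b-hat) (pi_b y) = 0 shows that y is orthogonal to H_a.  The only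
   analytic input is the projection theorem for closed subspaces of a Hilbert space. *)

lemma closed_orthogonal_comp: "closed (orthogonal_comp (S::'v::real_inner set))"
proof -
  have "orthogonal_comp S = (\<Inter>y\<in>S. {x. inner y x = 0})"
    by (auto simp: orthogonal_comp_def orthogonal_def)
  moreover have "closed {x. inner y x = 0}" for y :: 'v
    by (intro closed_Collect_eq continuous_intros)
  ultimately show ?thesis by auto
qed

lemma orthogonal_comp_closure_span:
  assumes "y \<in> orthogonal_comp U"
  shows "y \<in> orthogonal_comp (closure (span U))"
proof -
  have "span U \<subseteq> {z. inner z y = 0}"
  proof
    fix z assume "z \<in> span U"
    moreover have "\<And>u. u \<in> U \<Longrightarrow> orthogonal y u" using assms
      by (simp add: orthogonal_comp_def orthogonal_def inner_commute)
    ultimately have "orthogonal y z" by (rule orthogonal_to_span)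
    thus "z \<in> {z. inner z y = 0}" by (simp add: orthogonal_def inner_commute)
  qed
  moreover have "closed {z. inner z y = 0}" by (intro closed_Collect_eq continuous_intros)
  ultimately have "closure (span U) \<subseteq> {z. inner z y = 0}" by (rule closure_minimal)
  thus ?thesis by (auto simp: orthogonal_comp_def orthogonal_def)
qed

text \<open>Uniqueness needs no hypothesis on \<open>S\<close>: for two candidates \<open>y, z\<close> the difference
  \<open>z - y\<close> lies in \<open>S\<^sup>\<bottom>\<close> while \<open>y, z \<in> S\<close>, so \<open>z - y\<close> is orthogonal to itself.\<close>

lemma orth_proj_eqI:
  assumes y: "y \<in> S" "x - y \<in> orthogonal_comp S"
  shows "orth_proj S x = y"
  unfolding orth_proj_def
proof (rule the_equality)
  fix z assume z: "z \<in> S \<and> x - z \<in> orthogonal_comp S"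
  have "z - y = (x - y) - (x - z)" by simp
  also have "\<dots> \<in> orthogonal_comp S"
    using subspace_diff[OF subspace_orthogonal_comp, of "x - y" S "x - z"] z y by blast
  finally have "inner (z - y) z = 0" "inner (z - y) y = 0"
    using z y by (auto simp: orthogonal_comp_def orthogonal_def inner_commute)
  then have "inner (z - y) (z - y) = 0" by (simp add: inner_diff_right)
  then show "z = y" by simp
qed (use y in auto)

lemma parallelogram_law:
  fixes u v :: "'v::real_inner"
  shows "(norm (u + v))\<^sup>2 + (norm (u - v))\<^sup>2 = 2 * (norm u)\<^sup>2 + 2 * (norm v)\<^sup>2"
  by (simp add: power2_norm_eq_inner inner_add_left inner_add_right inner_diff_left
      inner_diff_right inner_commute)

lemma convex_dist_parallelogram:
  fixes S :: "'v::real_inner set"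
  assumes "convex S" and u: "u \<in> S" and v: "v \<in> S"
    and lower: "\<And>s. s \<in> S \<Longrightarrow> d \<le> (norm (x - s))\<^sup>2"
  shows "(norm (u - v))\<^sup>2 \<le> 2 * (norm (x - u))\<^sup>2 + 2 * (norm (x - v))\<^sup>2 - 4 * d"
proof -
  have "(1/2) *\<^sub>R u + (1/2) *\<^sub>R v \<in> S" using assms by (intro convexD) auto
  from lower[OF this] have "4 * d \<le> (norm (2 *\<^sub>R (x - ((1/2) *\<^sub>R u + (1/2) *\<^sub>R v))))\<^sup>2"
    by (simp add: power_mult_distrib)
  also have "2 *\<^sub>R (x - ((1/2) *\<^sub>R u + (1/2) *\<^sub>R v)) = (x - u) + (x - v)"
    by (simp add: algebra_simps scaleR_2)
  finally show ?thesis
    using parallelogram_law[of "x - u" "x - v"] by (simp add: norm_minus_commute)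
qed

text \<open>The projection theorem: a minimizing sequence is Cauchy by the parallelogram law.\<close>

lemma nearest_point_exists_complete:
  fixes S :: "'v::{real_inner,complete_space} set"
  assumes conv: "convex S" and cl: "closed S" and ne: "S \<noteq> {}"
  shows "\<exists>y\<in>S. \<forall>z\<in>S. norm (x - y) \<le> norm (x - z)"
proof -
  define d where "d = Inf ((\<lambda>s. (norm (x - s))\<^sup>2) ` S)"
  have bdd: "bdd_below ((\<lambda>s. (norm (x - s))\<^sup>2) ` S)" by (rule bdd_belowI[of _ 0]) auto
  have lower: "d \<le> (norm (x - s))\<^sup>2" if "s \<in> S" for s
    unfolding d_def using bdd that by (simp add: cInf_lower)
  define e :: "nat \<Rightarrow> real" where "e n = inverse (real (Suc n))" for n
  have "\<exists>s\<in>S. (norm (x - s))\<^sup>2 < d + e n" for n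
    using cInf_lessD[of "(\<lambda>s. (norm (x - s))\<^sup>2) ` S" "d + e n"] ne
    by (auto simp: d_def e_def)
  then obtain s where s: "\<And>n. s n \<in> S" "\<And>n. (norm (x - s n))\<^sup>2 < d + e n"
    by metis
  have e_antimono: "e n \<le> e N" if "N \<le> n" for n N
    unfolding e_def using that by (intro le_imp_inverse_le) auto
  have "Cauchy s"
  proof (rule metric_CauchyI)
    fix r :: real assume "0 < r"
    then obtain N where N: "inverse (real (Suc N)) < r\<^sup>2 / 4"
      using reals_Archimedean[of "r\<^sup>2 / 4"] by auto
    have "dist (s m) (s n) < r" if "N \<le> m" "N \<le> n" for m n
    proof -
      have "(norm (s m - s n))\<^sup>2 < 2 * e m + 2 * e n"
        using convex_dist_parallelogram[OF conv s(1)[of m] s(1)[of n] lower] s(2)[of m] s(2)[of n]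
        by linarith
      also have "\<dots> \<le> 4 * e N" using e_antimono[OF that(1)] e_antimono[OF that(2)] by linarith
      also have "\<dots> < r\<^sup>2" using N by (simp add: e_def)
      finally show ?thesis
        using \<open>0 < r\<close> by (simp add: dist_norm power_less_imp_less_base)
    qed
    then show "\<exists>N. \<forall>m\<ge>N. \<forall>n\<ge>N. dist (s m) (s n) < r" by blast
  qed
  then obtain y where lim: "s \<longlonglongrightarrow> y" using Cauchy_convergent_iff convergent_def by blast
  have "y \<in> S" using closed_sequentially[OF cl] s(1) lim by blast
  have "(norm (x - y))\<^sup>2 \<le> d"
  proof (rule LIMSEQ_le)
    show "(\<lambda>n. (norm (x - s n))\<^sup>2) \<longlonglongrightarrow> (norm (x - y))\<^sup>2"
      by (intro tendsto_intros lim)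
    show "(\<lambda>n. d + e n) \<longlonglongrightarrow> d"
      using tendsto_add[OF tendsto_const LIMSEQ_inverse_real_of_nat, of d] by (simp add: e_def)
  qed (use s(2) less_imp_le in blast)
  then have "norm (x - y) \<le> norm (x - z)" if "z \<in> S" for z
    using lower[OF that] by (meson order.trans power2_le_imp_le norm_ge_zero)
  with \<open>y \<in> S\<close> show ?thesis by blast
qed

lemma nearest_point_subspace_orthogonal:
  fixes S :: "'v::real_inner set"
  assumes sub: "subspace S" and "y \<in> S"
    and nearest: "\<And>z. z \<in> S \<Longrightarrow> norm (x - y) \<le> norm (x - z)"
  shows "x - y \<in> orthogonal_comp S"
  unfolding orthogonal_comp_def orthogonal_def
proof safe
  fix z assume "z \<in> S"
  define w where "w = x - y"
  show "inner z (x - y) = 0"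
  proof (cases "z = 0")
    case False
    define t where "t = inner w z / inner z z"
    have zz: "0 < inner z z" using False by simp
    have "y + t *\<^sub>R z \<in> S" using \<open>y \<in> S\<close> \<open>z \<in> S\<close> sub by (simp add: subspace_add subspace_scale)
    from nearest[OF this] have "(norm w)\<^sup>2 \<le> (norm (w - t *\<^sub>R z))\<^sup>2"
      by (simp add: w_def algebra_simps power_mono)
    then have "0 \<le> t * t * inner z z - 2 * t * inner w z"
      by (simp add: power2_norm_eq_inner inner_diff_left inner_diff_right inner_commute
          algebra_simps)
    also have "\<dots> = - (inner w z)\<^sup>2 / inner z z"
      using zz by (simp add: t_def power2_eq_square field_simps)
    finally have "(inner w z)\<^sup>2 \<le> 0" using zz by (simp add: divide_le_0_iff)
    then show ?thesis by (simp add: w_def inner_commute)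
  qed simp
qed

lemma orth_proj_closed_subspace:
  fixes S :: "'v::{real_inner,complete_space} set"
  assumes "subspace S" and "closed S"
  shows "orth_proj S x \<in> S" and "x - orth_proj S x \<in> orthogonal_comp S"
proof -
  obtain y where "y \<in> S" and "\<forall>z\<in>S. norm (x - y) \<le> norm (x - z)"
    using nearest_point_exists_complete[of S x] assms subspace_imp_convex subspace_0 by blast
  then have "x - y \<in> orthogonal_comp S"
    using assms(1) nearest_point_subspace_orthogonal by blast
  with \<open>y \<in> S\<close> show "orth_proj S x \<in> S" and "x - orth_proj S x \<in> orthogonal_comp S"
    by (simp_all add: orth_proj_eqI)
qed

lemma orth_proj_fixes:
  assumes "subspace S" and "x \<in> S"
  shows "orth_proj S x = x"
  using assms by (intro orth_proj_eqI) (auto intro: subspace_0 subspace_orthogonal_comp)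

lemma orth_proj_orthogonal_comp:
  assumes "0 \<in> S" and "x \<in> orthogonal_comp S"
  shows "orth_proj S x = 0"
  using assms by (intro orth_proj_eqI) auto

lemma orth_proj_idem:
  fixes S :: "'v::{real_inner,complete_space} set"
  assumes "subspace S" and "closed S"
  shows "orth_proj S \<circ> orth_proj S = orth_proj S"
  using assms by (auto simp: orth_proj_fixes orth_proj_closed_subspace)

lemma orth_proj_comp_orthogonal:
  fixes S T :: "'v::{real_inner,complete_space} set"
  assumes "subspace S" "subspace T" "closed T"
    and orth: "\<And>x y. x \<in> S \<Longrightarrow> y \<in> T \<Longrightarrow> inner x y = 0"
  shows "orth_proj S \<circ> orth_proj T = (\<lambda>x. 0)"
proof
  fix x
  have "orth_proj T x \<in> orthogonal_comp S"
    using orth orth_proj_closed_subspace(1)[OF assms(2,3)]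
    by (auto simp: orthogonal_comp_def orthogonal_def)
  then show "(orth_proj S \<circ> orth_proj T) x = 0"
    using assms(1) by (simp add: orth_proj_orthogonal_comp subspace_0)
qed

lemma Hsub_principal:
  fixes H :: "'a::order \<Rightarrow> 'v::real_inner set"
  assumes "subspace (H a)" "closed (H a)"
    and incr: "\<And>b. b \<le> a \<Longrightarrow> H b \<subseteq> H a"
  shows "Hsub H {x. x \<le> a} = H a"
proof -
  have "(\<Union>b\<in>{x. x \<le> a}. H b) = H a" using incr by blast
  then show ?thesis using assms(1,2) by (simp add: Hsub_def span_eq_iff[THEN iffD2])
qed

lemma Sset_subspace_closed:
  fixes H :: "'a::order \<Rightarrow> 'v::real_inner set"
  assumes "\<And>a. subspace (H a) \<and> closed (H a)"
  shows "subspace (Sset H a)" and "closed (Sset H a)"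
proof -
  have "subspace (Hplus H a) \<and> closed (Hplus H a)"
    using assms by (cases a) auto
  then show "subspace (Sset H a)" "closed (Sset H a)"
    unfolding Sset_def
    by (auto intro!: subspace_inter subspace_Int subspace_orthogonal_comp closed_Int closed_INT
        simp: closed_orthogonal_comp)
qed

lemma orthogonal_of_incomparable:
  fixes H :: "'a::order \<Rightarrow> 'v::{real_inner,complete_space} set"
  assumes closed_sub: "\<And>a. subspace (H a) \<and> closed (H a)"
    and incr: "\<And>a b. a \<le> b \<Longrightarrow> H a \<subseteq> H b"
    and inter: "piB H ({x. x \<le> a} \<inter> {x. x \<le> b}) = piB H {x. x \<le> a} \<circ> piB H {x. x \<le> b}"
    and incomparable: "\<not> a \<le> b" "\<not> b < a"
    and y: "y \<in> H b" and perp: "\<And>c. c < b \<Longrightarrow> y \<in> orthogonal_comp (H c)"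
  shows "y \<in> orthogonal_comp (H a)"
proof -
  have "c < b" if "c \<le> a" "c \<le> b" for c
    using that incomparable by (metis order.order_iff_strict)
  then have "y \<in> orthogonal_comp (\<Union>c\<in>{x. x \<le> a} \<inter> {x. x \<le> b}. H c)"
    using perp by (auto simp: orthogonal_comp_def)
  then have "piB H ({x. x \<le> a} \<inter> {x. x \<le> b}) y = 0"
    unfolding piB_def Hsub_def
    by (intro orth_proj_orthogonal_comp orthogonal_comp_closure_span)
      (auto intro: closure_subset[THEN subsetD] span_0)
  moreover have "piB H {x. x \<le> b} y = y"
    using closed_sub incr y by (simp add: piB_def Hsub_principal orth_proj_fixes)
  ultimately have "orth_proj (H a) y = 0"
    using fun_cong[OF inter, of y] closed_sub incr by (simp add: piB_def Hsub_principal)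
  then show ?thesis
    using orth_proj_closed_subspace(2)[of "H a" y] closed_sub by simp
qed

lemma Sset_orthogonal:
  fixes H :: "'a::order \<Rightarrow> 'v::{real_inner,complete_space} set"
  assumes closed_sub: "\<And>a. subspace (H a) \<and> closed (H a)"
    and incr: "\<And>a b. a \<le> b \<Longrightarrow> H a \<subseteq> H b"
    and inter: "\<And>a b. piB H ({x. x \<le> a} \<inter> {x. x \<le> b})
                        = piB H {x. x \<le> a} \<circ> piB H {x. x \<le> b}"
    and "a \<noteq> b" and x: "x \<in> Sset H a" and y: "y \<in> Sset H b"
  shows "inner x y = 0"
proof -
  have S: "z \<in> Hplus H c" "plus_less c' c \<Longrightarrow> z \<in> orthogonal_comp (Hplus H c')"
    if "z \<in> Sset H c" for z c c'
    using that unfolding Sset_def by blast+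
  consider "plus_less b a" | "plus_less a b"
    | a' b' where "a = Some a'" "b = Some b'" "\<not> a' \<le> b'" "\<not> b' < a'"
    using \<open>a \<noteq> b\<close> by (cases a; cases b) (auto simp: less_le)
  then show ?thesis
  proof cases
    case 1
    with S(2)[OF x] S(1)[OF y] have "inner y x = 0" by (simp add: orthogonal_comp_def orthogonal_def)
    then show ?thesis by (simp only: inner_commute)
  next
    case 2
    with S(1)[OF x] S(2)[OF y] show ?thesis by (simp add: orthogonal_comp_def orthogonal_def)
  next
    case 3
    have perp: "y \<in> orthogonal_comp (H c)" if "c < b'" for c
      using S(2)[OF y, of "Some c"] that 3 by simp
    have "y \<in> H b'" using S(1)[OF y] 3 by simp
    from orthogonal_of_incomparable[OF closed_sub incr inter[of a' b'] 3(3,4) this perp]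
    have "y \<in> orthogonal_comp (H a')" .
    then show ?thesis
      using 3 S(1)[OF x] by (auto simp: orthogonal_comp_def orthogonal_def)
  qed
qed

theorem lemma3p5:
  fixes H :: "'a::order \<Rightarrow> 'v::{real_inner,complete_space} set"
  assumes closed_sub: "\<And>a. subspace (H a) \<and> closed (H a)"
    and incr: "\<And>a b. a \<le> b \<Longrightarrow> H a \<subseteq> H b"
    and inter: "\<And>a b. piB H ({x. x \<le> a} \<inter> {x. x \<le> b})
                        = piB H {x. x \<le> a} \<circ> piB H {x. x \<le> b}"
  shows "\<forall>a b :: 'a option.
           orth_proj (Sset H a) \<circ> orth_proj (Sset H b)
             = (if a = b then orth_proj (Sset H a) else (\<lambda>x. 0))"
proof (intro allI)
  fix a b :: "'a option"
  note S = Sset_subspace_closed[of H, OF closed_sub]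
  show "orth_proj (Sset H a) \<circ> orth_proj (Sset H b)
          = (if a = b then orth_proj (Sset H a) else (\<lambda>x. 0))"
  proof (cases "a = b")
    case True
    then show ?thesis using S by (simp add: orth_proj_idem)
  next
    case False
    then show ?thesis
      using S Sset_orthogonal[OF closed_sub incr inter False] by (simp add: orth_proj_comp_orthogonal)
  qed
qed

end
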